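(* For every $\mu>0$: (i) $q_\mu:\mathbb{R}^n\to\mathbb{R}\cup\{\infty\}$ is proper and lower semicontinuous, with $\operatorname{dom} q_\mu=\operatorname{dom} g\cap\{z : c(z)<0\}$ and $\inf q_\mu\in\mathbb{R}$; (ii) $f_\mu$ has locally Lipschitz continuous gradient on $\operatorname{dom} f_\mu=\{z : c(z)<0\}$.
   Context: Let $f:\mathbb{R}^n\to\mathbb{R}$ have locally Lipschitz continuous gradient; let $g:\mathbb{R}^n\to\mathbb{R}\cup\{\infty\}$ be proper, lower semicontinuous, prox-bounded (i.e. $g+\frac{1}{2\gamma}\|\cdot\|^2$ is bounded below for some $\gamma>0$), and continuous relative to $\operatorname{dom} g$ (whenever $\operatorname{dom} g\ni x^k\to x$ one has $g(x^k)\to g(x)$); let $c:\mathbb{R}^n\to\mathbb{R}^m$ have locally Lipschitz continuous Jacobian. Let $q=f+g$, assume $\inf\{q(x): c(x)\le 0\}\in\mathbb{R}$ and that $F=\operatorname{dom} q\cap\{x: c(x)<0\}\neq\emptyset$. Let $b:\mathbb{R}\to[0,\infty]$ satisfy $\operatorname{dom} b=(-\infty,0)$, $b$ twice continuously differentiable with $b'>0$ on $(-\infty,0)$, and $b(t)\to\infty$ as $t\to0^-$. For $\mu>0$ define $f_\mu(z)=f(z)+\mu\sum_{i=1}^m b(c_i(z))$ (equal to $\infty$ unless $c(z)<0$) and $q_\mu=f_\mu+g$. *)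

theory Defs
  imports "HOL-Analysis.Analysis"
begin

text \<open>Extended-real-valued functions R^n -> R \<union> {\<infinity>} are modelled as maps into ereal.\<close>

definition edom :: "('a \<Rightarrow> ereal) \<Rightarrow> 'a set" where
  "edom h = {x. h x \<noteq> \<infinity>}"

definition proper_fun :: "('a \<Rightarrow> ereal) \<Rightarrow> bool" where
  "proper_fun h \<longleftrightarrow> (\<forall>x. h x \<noteq> -\<infinity>) \<and> (\<exists>x. h x \<noteq> \<infinity>)"

definition lsc_fun :: "('a::topological_space \<Rightarrow> ereal) \<Rightarrow> bool" where
  "lsc_fun h \<longleftrightarrow> (\<forall>x. h x \<le> Liminf (at x) h)"

definition loc_lipschitz_on :: "'a::metric_space set \<Rightarrow> ('a \<Rightarrow> 'b::metric_space) \<Rightarrow> bool" where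
  "loc_lipschitz_on S G \<longleftrightarrow>
     (\<forall>x\<in>S. \<exists>e>0. \<exists>L. lipschitz_on L (ball x e \<inter> S) G)"

definition loc_lip_gradient_on :: "('a::real_inner set) \<Rightarrow> ('a \<Rightarrow> real) \<Rightarrow> bool" where
  "loc_lip_gradient_on S h \<longleftrightarrow>
     (\<exists>G. (\<forall>x\<in>S. (h has_derivative (\<lambda>v. G x \<bullet> v)) (at x)) \<and> loc_lipschitz_on S G)"

definition loc_lip_jacobian :: "(real^'n \<Rightarrow> real^'m) \<Rightarrow> bool" where
  "loc_lip_jacobian c \<longleftrightarrow>
     (\<exists>J :: real^'n \<Rightarrow> real^'n^'m.
        (\<forall>x. (c has_derivative (\<lambda>v. J x *v v)) (at x)) \<and> loc_lipschitz_on UNIV J)"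

definition f_mu :: "(real^'n \<Rightarrow> real) \<Rightarrow> (real \<Rightarrow> ereal) \<Rightarrow> (real^'n \<Rightarrow> real^'m) \<Rightarrow> real
                     \<Rightarrow> real^'n \<Rightarrow> ereal" where
  "f_mu f b c \<mu> z = ereal (f z) + ereal \<mu> * (\<Sum>i\<in>UNIV. b (c z $ i))"

definition q_mu :: "(real^'n \<Rightarrow> real) \<Rightarrow> (real^'n \<Rightarrow> ereal) \<Rightarrow> (real \<Rightarrow> ereal)
                     \<Rightarrow> (real^'n \<Rightarrow> real^'m) \<Rightarrow> real \<Rightarrow> real^'n \<Rightarrow> ereal" where
  "q_mu f g b c \<mu> z = f_mu f b c \<mu> z + g z"

end

theory Submission
  imports Defs
begin

text \<open>
  On the open set S = {z. c z < 0} the barrier term is finite and f_mu = f + \<mu> * (\<Sum>i. b \<circ> c_i).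
  Sums, products and compositions of locally Lipschitz maps are locally Lipschitz, and a C^1
  function is locally Lipschitz; with the chain rule this gives the locally Lipschitz gradient
  of f_mu on S. Viewed as an extended-real function, b is continuous on all of R: it is finite
  and continuous on (-\<infinity>, 0), equal to \<infinity> on [0, \<infinity>), and tends to \<infinity> as t tends to 0 from
  the left. Hence f_mu is continuous with values in (-\<infinity>, \<infinity>], and q_mu = f_mu + g is lower
  semicontinuous. Since b \<ge> 0, q_mu dominates f + g on the feasible set, which bounds inf q_mu
  from below.
\<close>

section \<open>Local Lipschitz continuity\<close>

definition locally_bounded_on :: "'a::metric_space set \<Rightarrow> ('a \<Rightarrow> 'b::real_normed_vector) \<Rightarrow> bool" where
  "locally_bounded_on S F \<longleftrightarrow> (\<forall>x\<in>S. \<exists>e>0. \<exists>B. \<forall>y\<in>ball x e \<inter> S. norm (F y) \<le> B)"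

lemma loc_lipschitz_onE:
  assumes "loc_lipschitz_on S F" "x \<in> S"
  obtains e L where "e > 0" "L-lipschitz_on (ball x e \<inter> S) F"
  using assms unfolding loc_lipschitz_on_def by blast

lemma loc_lipschitz_on_subset:
  assumes "loc_lipschitz_on T F" "S \<subseteq> T"
  shows "loc_lipschitz_on S F"
  unfolding loc_lipschitz_on_def
proof
  fix x assume "x \<in> S"
  then obtain e L where "e > 0" "L-lipschitz_on (ball x e \<inter> T) F"
    using assms by (blast elim: loc_lipschitz_onE)
  moreover have "ball x e \<inter> S \<subseteq> ball x e \<inter> T" using assms(2) by blast
  ultimately show "\<exists>e>0. \<exists>L. L-lipschitz_on (ball x e \<inter> S) F"
    using lipschitz_on_subset by blast
qed

lemma loc_lipschitz_on_const: "loc_lipschitz_on S (\<lambda>x. c)"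
  unfolding loc_lipschitz_on_def using lipschitz_on_constant zero_less_one by blast

lemma loc_lipschitz_on_common_ball:
  assumes "loc_lipschitz_on S F" "loc_lipschitz_on S G" "x \<in> S"
  obtains e L M where "e > 0" "L-lipschitz_on (ball x e \<inter> S) F" "M-lipschitz_on (ball x e \<inter> S) G"
proof -
  obtain e1 L where e1: "e1 > 0" "L-lipschitz_on (ball x e1 \<inter> S) F"
    using assms(1,3) by (rule loc_lipschitz_onE)
  obtain e2 M where e2: "e2 > 0" "M-lipschitz_on (ball x e2 \<inter> S) G"
    using assms(2,3) by (rule loc_lipschitz_onE)
  show thesis
  proof (rule that)
    show "min e1 e2 > 0" using e1 e2 by simp
    show "L-lipschitz_on (ball x (min e1 e2) \<inter> S) F" by (rule lipschitz_on_subset[OF e1(2)]) auto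
    show "M-lipschitz_on (ball x (min e1 e2) \<inter> S) G" by (rule lipschitz_on_subset[OF e2(2)]) auto
  qed
qed

lemma loc_lipschitz_on_add:
  fixes F G :: "'a::metric_space \<Rightarrow> 'b::real_normed_vector"
  assumes "loc_lipschitz_on S F" "loc_lipschitz_on S G"
  shows "loc_lipschitz_on S (\<lambda>x. F x + G x)"
  unfolding loc_lipschitz_on_def
proof
  fix x assume "x \<in> S"
  then obtain e L M where "e > 0" "L-lipschitz_on (ball x e \<inter> S) F" "M-lipschitz_on (ball x e \<inter> S) G"
    using loc_lipschitz_on_common_ball[OF assms] by blast
  then show "\<exists>e>0. \<exists>L. L-lipschitz_on (ball x e \<inter> S) (\<lambda>x. F x + G x)"
    using lipschitz_on_add by blast
qed

lemma lipschitz_on_ball_norm_bound: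
  assumes "L-lipschitz_on (ball x e \<inter> S) F" "x \<in> S" "y \<in> ball x e \<inter> S"
  shows "norm (F y) \<le> norm (F x) + L * e"
proof -
  have "x \<in> ball x e" using assms(3) by (auto simp: dist_commute intro: le_less_trans[OF zero_le_dist])
  then have "norm (F y - F x) \<le> L * dist y x"
    using lipschitz_onD[OF assms(1)] assms by (simp add: dist_norm)
  also have "\<dots> \<le> L * e"
    using assms(3) lipschitz_on_nonneg[OF assms(1)] by (intro mult_left_mono) (auto simp: dist_commute)
  finally show ?thesis using norm_triangle_sub[of "F y" "F x"] by simp
qed

lemma loc_lipschitz_on_imp_locally_bounded_on:
  assumes "loc_lipschitz_on S F"
  shows "locally_bounded_on S F"
  unfolding locally_bounded_on_def
proof
  fix x assume "x \<in> S"
  then obtain e L where "e > 0" "L-lipschitz_on (ball x e \<inter> S) F"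
    using loc_lipschitz_onE[OF assms] by blast
  then show "\<exists>e>0. \<exists>B. \<forall>y\<in>ball x e \<inter> S. norm (F y) \<le> B"
    using lipschitz_on_ball_norm_bound[OF _ \<open>x \<in> S\<close>] by blast
qed

lemma continuous_on_imp_locally_bounded_on:
  assumes "continuous_on S F"
  shows "locally_bounded_on S F"
  unfolding locally_bounded_on_def
proof
  fix x assume "x \<in> S"
  then have "(F \<longlongrightarrow> F x) (at x within S)"
    using assms by (simp add: continuous_on_def)
  then have "eventually (\<lambda>y. norm (F y) < norm (F x) + 1) (at x within S)"
    by (intro order_tendstoD(2)[OF tendsto_norm]) auto
  then obtain e where "e > 0" and e: "\<forall>y\<in>S. y \<noteq> x \<and> dist y x < e \<longrightarrow> norm (F y) < norm (F x) + 1"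
    unfolding eventually_at by blast
  have "norm (F y) \<le> norm (F x) + 1" if "y \<in> ball x e \<inter> S" for y
  proof (cases "y = x")
    case False
    then show ?thesis using e that by (simp add: dist_commute less_imp_le)
  qed simp
  then show "\<exists>e>0. \<exists>B. \<forall>y\<in>ball x e \<inter> S. norm (F y) \<le> B" using \<open>e > 0\<close> by blast
qed

lemma locally_bounded_on_mono:
  assumes "locally_bounded_on S F" "\<And>x. x \<in> S \<Longrightarrow> norm (G x) \<le> norm (F x)"
  shows "locally_bounded_on S G"
  using assms unfolding locally_bounded_on_def by (meson IntD2 order_trans)

lemma loc_lipschitz_on_scaleR:
  fixes a :: "'a::metric_space \<Rightarrow> real" and V :: "'a \<Rightarrow> 'b::real_normed_vector"
  assumes "loc_lipschitz_on S a" "loc_lipschitz_on S V"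
  shows "loc_lipschitz_on S (\<lambda>x. a x *\<^sub>R V x)"
  unfolding loc_lipschitz_on_def
proof
  fix x assume x: "x \<in> S"
  then obtain e L M where "e > 0" and La: "L-lipschitz_on (ball x e \<inter> S) a"
    and MV: "M-lipschitz_on (ball x e \<inter> S) V"
    using loc_lipschitz_on_common_ball[OF assms] by blast
  define U where "U = ball x e \<inter> S"
  define A where "A = \<bar>a x\<bar> + L * e"
  define B where "B = norm (V x) + M * e"
  have bounds: "\<bar>a y\<bar> \<le> A" "norm (V y) \<le> B" if "y \<in> U" for y
    using lipschitz_on_ball_norm_bound[OF La x] lipschitz_on_ball_norm_bound[OF MV x] that
    by (auto simp: A_def B_def U_def)
  have "0 \<le> L" "0 \<le> M" using La MV lipschitz_on_nonneg by blast+
  have "0 \<le> A" "0 \<le> B" using \<open>0 \<le> L\<close> \<open>0 \<le> M\<close> \<open>e > 0\<close> by (simp_all add: A_def B_def)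
  have "(A * M + L * B)-lipschitz_on U (\<lambda>x. a x *\<^sub>R V x)"
  proof (rule lipschitz_onI)
    fix y z assume y: "y \<in> U" and z: "z \<in> U"
    have "a y *\<^sub>R V y - a z *\<^sub>R V z = a y *\<^sub>R (V y - V z) + (a y - a z) *\<^sub>R V z"
      by (simp add: algebra_simps)
    then have "dist (a y *\<^sub>R V y) (a z *\<^sub>R V z) \<le> \<bar>a y\<bar> * dist (V y) (V z) + dist (a y) (a z) * norm (V z)"
      by (metis dist_norm dist_real_def norm_scaleR norm_triangle_ineq)
    also have "\<dots> \<le> A * (M * dist y z) + (L * dist y z) * B"
      using y z bounds lipschitz_onD[OF La] lipschitz_onD[OF MV] \<open>0 \<le> A\<close> \<open>0 \<le> L\<close> unfolding U_def
      by (intro add_mono mult_mono) auto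
    finally show "dist (a y *\<^sub>R V y) (a z *\<^sub>R V z) \<le> (A * M + L * B) * dist y z"
      by (simp add: algebra_simps)
  qed (simp add: \<open>0 \<le> A\<close> \<open>0 \<le> B\<close> \<open>0 \<le> L\<close> \<open>0 \<le> M\<close>)
  then show "\<exists>e>0. \<exists>L. L-lipschitz_on (ball x e \<inter> S) (\<lambda>x. a x *\<^sub>R V x)"
    using \<open>e > 0\<close> unfolding U_def by blast
qed

lemma loc_lipschitz_on_compose:
  assumes u: "loc_lipschitz_on S u" and h: "loc_lipschitz_on T h" and "u ` S \<subseteq> T"
  shows "loc_lipschitz_on S (\<lambda>x. h (u x))"
  unfolding loc_lipschitz_on_def
proof
  fix x assume x: "x \<in> S"
  obtain d M where "d > 0" and Mh: "M-lipschitz_on (ball (u x) d \<inter> T) h"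
    using loc_lipschitz_onE[OF h] x assms(3) by blast
  obtain e L where "e > 0" and Lu: "L-lipschitz_on (ball x e \<inter> S) u"
    using loc_lipschitz_onE[OF u x] by blast
  have "0 \<le> L" using Lu lipschitz_on_nonneg by blast
  define r where "r = min e (d / (L + 1))"
  have "r > 0" using \<open>d > 0\<close> \<open>e > 0\<close> \<open>0 \<le> L\<close> by (simp add: r_def)
  have Lu': "L-lipschitz_on (ball x r \<inter> S) u"
    by (rule lipschitz_on_subset[OF Lu]) (auto simp: r_def)
  have "u y \<in> ball (u x) d \<inter> T" if y: "y \<in> ball x r \<inter> S" for y
  proof -
    have "dist (u x) (u y) \<le> L * dist x y"
      using lipschitz_onD[OF Lu'] x y \<open>r > 0\<close> by simp
    also have "\<dots> \<le> L * (d / (L + 1))"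
      using y \<open>0 \<le> L\<close> by (intro mult_left_mono) (auto simp: r_def)
    also have "\<dots> < d"
      using \<open>d > 0\<close> \<open>0 \<le> L\<close> by (simp add: field_simps)
    finally show ?thesis using y assms(3) by auto
  qed
  then have "(M * L)-lipschitz_on (ball x r \<inter> S) (\<lambda>x. h (u x))"
    by (intro lipschitz_on_compose2[OF Lu'] lipschitz_on_subset[OF Mh]) auto
  then show "\<exists>e>0. \<exists>L. L-lipschitz_on (ball x e \<inter> S) (\<lambda>x. h (u x))"
    using \<open>r > 0\<close> by blast
qed

lemma loc_lipschitz_on_vec_nth:
  assumes "loc_lipschitz_on S F"
  shows "loc_lipschitz_on S (\<lambda>x. F x $ i)"
  using assms unfolding loc_lipschitz_on_def lipschitz_on_def
  by (meson dist_vec_nth_le order_trans)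

lemma locally_bounded_derivative_imp_loc_lipschitz_on:
  assumes "open S" and deriv: "\<And>x. x \<in> S \<Longrightarrow> (h has_derivative D x) (at x)"
    and bounded: "locally_bounded_on S (\<lambda>x. onorm (D x))"
  shows "loc_lipschitz_on S h"
  unfolding loc_lipschitz_on_def
proof
  fix x assume x: "x \<in> S"
  obtain e1 B where "e1 > 0" and B: "\<And>y. y \<in> ball x e1 \<inter> S \<Longrightarrow> norm (onorm (D y)) \<le> B"
    using bounded x unfolding locally_bounded_on_def by blast
  obtain e2 where "e2 > 0" "ball x e2 \<subseteq> S"
    using \<open>open S\<close> x open_contains_ball by blast
  define e where "e = min e1 e2"
  have sub: "ball x e \<subseteq> ball x e1 \<inter> S" using \<open>ball x e2 \<subseteq> S\<close> by (auto simp: e_def)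
  have "0 \<le> B" using B[of x] x \<open>e1 > 0\<close> by (meson IntI centre_in_ball norm_ge_zero order_trans)
  have "B-lipschitz_on (ball x e) h"
  proof (rule bounded_derivative_imp_lipschitz)
    show "(h has_derivative D y) (at y within ball x e)" if "y \<in> ball x e" for y
      using deriv sub that by (blast intro: has_derivative_at_withinI)
    show "onorm (D y) \<le> B" if "y \<in> ball x e" for y
      using B sub that by fastforce
  qed (simp_all add: \<open>0 \<le> B\<close>)
  then have "B-lipschitz_on (ball x e \<inter> S) h" by (rule lipschitz_on_subset) auto
  moreover have "e > 0" using \<open>e1 > 0\<close> \<open>e2 > 0\<close> by (simp add: e_def)
  ultimately show "\<exists>e>0. \<exists>L. L-lipschitz_on (ball x e \<inter> S) h" by blast
qed

lemma onorm_inner_le: "onorm (\<lambda>v. a \<bullet> v) \<le> norm a"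
  by (rule onorm_bound) (simp_all add: Cauchy_Schwarz_ineq2)

lemma onorm_mult_le: "onorm (\<lambda>v::real. a * v) \<le> \<bar>a\<bar>"
  by (rule onorm_bound) (simp_all add: abs_mult)

lemma continuous_derivative_imp_loc_lipschitz_on:
  assumes "open T" "\<And>t. t \<in> T \<Longrightarrow> (h has_real_derivative h' t) (at t)" "continuous_on T h'"
  shows "loc_lipschitz_on T h"
proof (rule locally_bounded_derivative_imp_loc_lipschitz_on)
  show "(h has_derivative (\<lambda>v. h' t * v)) (at t)" if "t \<in> T" for t
    using assms(2)[OF that] by (simp add: has_field_derivative_def)
  show "locally_bounded_on T (\<lambda>t. onorm (\<lambda>v. h' t * v))"
    using continuous_on_imp_locally_bounded_on[OF assms(3)]
    by (rule locally_bounded_on_mono)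
      (simp add: onorm_mult_le onorm_pos_le[OF bounded_linear_mult_right])
qed fact

section \<open>Locally Lipschitz gradients\<close>

lemma loc_lip_gradient_onI:
  assumes "\<And>x. x \<in> S \<Longrightarrow> (h has_derivative (\<lambda>v. G x \<bullet> v)) (at x)" "loc_lipschitz_on S G"
  shows "loc_lip_gradient_on S h"
  using assms unfolding loc_lip_gradient_on_def by blast

lemma loc_lip_gradient_on_imp_isCont:
  assumes "loc_lip_gradient_on S h" "x \<in> S"
  shows "isCont h x"
  using assms unfolding loc_lip_gradient_on_def by (blast intro: has_derivative_continuous)

lemma loc_lip_gradient_on_subset:
  assumes "loc_lip_gradient_on T h" "S \<subseteq> T"
  shows "loc_lip_gradient_on S h"
  using assms loc_lipschitz_on_subset unfolding loc_lip_gradient_on_def by (metis subsetD)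

lemma loc_lip_gradient_on_const: "loc_lip_gradient_on S (\<lambda>x. a)"
  by (rule loc_lip_gradient_onI[where G="\<lambda>x. 0"]) (simp_all add: loc_lipschitz_on_const)

lemma loc_lip_gradient_on_add:
  assumes "loc_lip_gradient_on S h" "loc_lip_gradient_on S k"
  shows "loc_lip_gradient_on S (\<lambda>x. h x + k x)"
proof -
  obtain G where G: "\<And>x. x \<in> S \<Longrightarrow> (h has_derivative (\<lambda>v. G x \<bullet> v)) (at x)" "loc_lipschitz_on S G"
    using assms(1) unfolding loc_lip_gradient_on_def by blast
  obtain H where H: "\<And>x. x \<in> S \<Longrightarrow> (k has_derivative (\<lambda>v. H x \<bullet> v)) (at x)" "loc_lipschitz_on S H"
    using assms(2) unfolding loc_lip_gradient_on_def by blast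
  show ?thesis
  proof (rule loc_lip_gradient_onI)
    show "((\<lambda>x. h x + k x) has_derivative (\<lambda>v. (G x + H x) \<bullet> v)) (at x)" if "x \<in> S" for x
      using has_derivative_add[OF G(1) H(1), OF that that] by (simp add: inner_add_left)
  qed (rule loc_lipschitz_on_add[OF G(2) H(2)])
qed

lemma loc_lip_gradient_on_cmult:
  assumes "loc_lip_gradient_on S h"
  shows "loc_lip_gradient_on S (\<lambda>x. a * h x)"
proof -
  obtain G where G: "\<And>x. x \<in> S \<Longrightarrow> (h has_derivative (\<lambda>v. G x \<bullet> v)) (at x)" "loc_lipschitz_on S G"
    using assms unfolding loc_lip_gradient_on_def by blast
  show ?thesis
  proof (rule loc_lip_gradient_onI)
    show "((\<lambda>x. a * h x) has_derivative (\<lambda>v. (a *\<^sub>R G x) \<bullet> v)) (at x)" if "x \<in> S" for x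
      using has_derivative_mult_right[OF G(1)[OF that]] by simp
  qed (rule loc_lipschitz_on_scaleR[OF loc_lipschitz_on_const G(2)])
qed

lemma loc_lip_gradient_on_sum:
  assumes "\<And>i. i \<in> I \<Longrightarrow> loc_lip_gradient_on S (h i)"
  shows "loc_lip_gradient_on S (\<lambda>x. \<Sum>i\<in>I. h i x)"
  using assms
  by (induction I rule: infinite_finite_induct)
    (simp_all add: loc_lip_gradient_on_const loc_lip_gradient_on_add)

lemma loc_lip_gradient_on_cong:
  assumes "open S" "\<And>x. x \<in> S \<Longrightarrow> h x = k x" "loc_lip_gradient_on S h"
  shows "loc_lip_gradient_on S k"
proof -
  obtain G where G: "\<And>x. x \<in> S \<Longrightarrow> (h has_derivative (\<lambda>v. G x \<bullet> v)) (at x)" "loc_lipschitz_on S G"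
    using assms(3) unfolding loc_lip_gradient_on_def by blast
  show ?thesis
  proof (rule loc_lip_gradient_onI)
    show "(k has_derivative (\<lambda>v. G x \<bullet> v)) (at x)" if "x \<in> S" for x
      by (rule has_derivative_transform_within_open[OF G(1)[OF that] assms(1) that assms(2)])
  qed (fact G(2))
qed

lemma loc_lip_gradient_on_imp_loc_lipschitz_on:
  assumes "open S" "loc_lip_gradient_on S h"
  shows "loc_lipschitz_on S h"
proof -
  obtain G where G: "\<And>x. x \<in> S \<Longrightarrow> (h has_derivative (\<lambda>v. G x \<bullet> v)) (at x)" "loc_lipschitz_on S G"
    using assms(2) unfolding loc_lip_gradient_on_def by blast
  have "locally_bounded_on S (\<lambda>x. onorm (\<lambda>v. G x \<bullet> v))"
    using loc_lipschitz_on_imp_locally_bounded_on[OF G(2)]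
    by (rule locally_bounded_on_mono) (simp add: onorm_inner_le onorm_pos_le bounded_linear_inner_right)
  then show ?thesis
    using locally_bounded_derivative_imp_loc_lipschitz_on[OF assms(1) G(1)] by blast
qed

lemma loc_lip_gradient_on_compose:
  assumes "open S" "loc_lip_gradient_on S u" "u ` S \<subseteq> T"
    and "\<And>t. t \<in> T \<Longrightarrow> (h has_real_derivative h' t) (at t)" "loc_lipschitz_on T h'"
  shows "loc_lip_gradient_on S (\<lambda>x. h (u x))"
proof -
  obtain G where G: "\<And>x. x \<in> S \<Longrightarrow> (u has_derivative (\<lambda>v. G x \<bullet> v)) (at x)" "loc_lipschitz_on S G"
    using assms(2) unfolding loc_lip_gradient_on_def by blast
  show ?thesis
  proof (rule loc_lip_gradient_onI)
    fix x assume "x \<in> S"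
    then have "u x \<in> T" using assms(3) by blast
    then have "(h has_derivative (\<lambda>s. h' (u x) * s)) (at (u x))"
      using assms(4) by (simp add: has_field_derivative_def)
    from has_derivative_compose[OF G(1)[OF \<open>x \<in> S\<close>] this]
    show "((\<lambda>x. h (u x)) has_derivative (\<lambda>v. (h' (u x) *\<^sub>R G x) \<bullet> v)) (at x)"
      by simp
  next
    have "loc_lipschitz_on S (\<lambda>x. h' (u x))"
      using loc_lip_gradient_on_imp_loc_lipschitz_on[OF assms(1,2)] assms(5,3)
      by (rule loc_lipschitz_on_compose)
    then show "loc_lipschitz_on S (\<lambda>x. h' (u x) *\<^sub>R G x)"
      using G(2) by (rule loc_lipschitz_on_scaleR)
  qed
qed

lemma loc_lip_jacobian_component_gradient:
  assumes "loc_lip_jacobian c"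
  shows "loc_lip_gradient_on UNIV (\<lambda>x. c x $ i)"
proof -
  obtain J where J: "\<And>x. (c has_derivative (\<lambda>v. J x *v v)) (at x)"
    and "loc_lipschitz_on UNIV J"
    using assms unfolding loc_lip_jacobian_def by blast
  show ?thesis
  proof (rule loc_lip_gradient_onI)
    show "((\<lambda>x. c x $ i) has_derivative (\<lambda>v. J x $ i \<bullet> v)) (at x)" for x
      using bounded_linear.has_derivative[OF bounded_linear_vec_nth J]
      by (simp add: matrix_vector_mul_component)
  qed (rule loc_lipschitz_on_vec_nth[OF \<open>loc_lipschitz_on UNIV J\<close>])
qed

section \<open>Extended-real functions: lower semicontinuity and limits\<close>

lemma lsc_fun_if_continuous:
  fixes h :: "'a::t2_space \<Rightarrow> ereal"
  assumes "\<And>x. isCont h x"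
  shows "lsc_fun h"
  unfolding lsc_fun_def le_Liminf_iff
proof (intro allI impI)
  fix x y assume "y < h x"
  then show "eventually (\<lambda>z. y < h z) (at x)"
    by (rule order_tendstoD(1)[OF assms[unfolded isCont_def]])
qed

lemma ereal_less_add_split:
  fixes a b y :: ereal
  assumes "a \<noteq> -\<infinity>" "b \<noteq> -\<infinity>" "y < a + b"
  obtains a' b' where "ereal a' < a" "ereal b' < b" "y < ereal (a' + b')"
proof -
  obtain r where r: "y < ereal r" "ereal r < a + b"
    using ereal_dense2[OF assms(3)] by blast
  show thesis
  proof (cases a)
    case (real s)
    then have "ereal (r - s) < b" using r(2) by (cases b) auto
    then obtain b' where "ereal (r - s) < ereal b'" "ereal b' < b"
      using ereal_dense2 by blast
    then show thesis using that[of "r - b'" b'] real r(1) by auto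
  next
    case PInf
    obtain b' where "ereal b' < b"
      using ereal_dense2[of "-\<infinity>" b] assms(2) by auto
    then show thesis using that[of "r - b'" b'] PInf r(1) by auto
  qed (use assms in simp)
qed

lemma lsc_fun_add:
  fixes h k :: "'a::topological_space \<Rightarrow> ereal"
  assumes "lsc_fun h" "lsc_fun k" "\<And>x. h x \<noteq> -\<infinity>" "\<And>x. k x \<noteq> -\<infinity>"
  shows "lsc_fun (\<lambda>x. h x + k x)"
  unfolding lsc_fun_def le_Liminf_iff
proof (intro allI impI)
  fix x y assume "y < h x + k x"
  then obtain a b where "ereal a < h x" "ereal b < k x" "y < ereal (a + b)"
    by (rule ereal_less_add_split[OF assms(3,4)])
  then have "eventually (\<lambda>z. ereal a < h z) (at x)" "eventually (\<lambda>z. ereal b < k z) (at x)"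
    using assms(1,2) unfolding lsc_fun_def le_Liminf_iff by blast+
  then show "eventually (\<lambda>z. y < h z + k z) (at x)"
  proof eventually_elim
    case (elim z)
    then have "ereal a + ereal b < h z + k z" by (rule ereal_add_strict_mono2)
    then show ?case using \<open>y < ereal (a + b)\<close> by simp
  qed
qed

lemma tendsto_sum_ereal_nonneg:
  fixes f :: "'i \<Rightarrow> 'a \<Rightarrow> ereal"
  assumes "\<And>i. i \<in> I \<Longrightarrow> (f i \<longlongrightarrow> l i) F" "\<And>i. i \<in> I \<Longrightarrow> l i \<ge> 0"
  shows "((\<lambda>x. \<Sum>i\<in>I. f i x) \<longlongrightarrow> (\<Sum>i\<in>I. l i)) F"
  using assms
proof (induction I rule: infinite_finite_induct)
  case (insert j I)
  have "(\<Sum>i\<in>I. l i) \<ge> 0" using insert.prems(2) by (simp add: sum_nonneg)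
  then show ?case
    using insert by (simp add: tendsto_add_ereal_nonneg)
qed simp_all

section \<open>The barrier problem\<close>

lemma ereal_real_of_barrier:
  fixes b :: "real \<Rightarrow> ereal"
  assumes "edom b = {..<0}" "\<And>t. b t \<ge> 0" "t < 0"
  shows "ereal (real_of_ereal (b t)) = b t"
  using assms(1,3) assms(2)[of t] unfolding edom_def set_eq_iff by (cases "b t") auto

lemma barrier_eq_infinity:
  fixes b :: "real \<Rightarrow> ereal"
  assumes "edom b = {..<0}" "t \<ge> 0"
  shows "b t = \<infinity>"
  using assms unfolding edom_def set_eq_iff by (metis lessThan_iff mem_Collect_eq not_le)

lemma isCont_barrier:
  fixes b :: "real \<Rightarrow> ereal"
  assumes dom: "edom b = {..<0}" and nonneg: "\<And>t. b t \<ge> 0"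
    and cont: "continuous_on {..<0} (\<lambda>t. real_of_ereal (b t))"
    and blowup: "filterlim (\<lambda>t. real_of_ereal (b t)) at_top (at_left 0)"
  shows "isCont b t"
proof -
  note finite = ereal_real_of_barrier[OF dom nonneg]
  note infinite = barrier_eq_infinity[OF dom]
  consider "t < 0" | "t = 0" | "t > 0" by linarith
  then show ?thesis
  proof cases
    case 1
    have "eventually (\<lambda>s. s < 0) (at t)"
      using 1 by (rule order_tendstoD(2)[OF tendsto_ident_at])
    then have ev: "eventually (\<lambda>s. ereal (real_of_ereal (b s)) = b s) (at t)"
      by (rule eventually_mono) (rule finite)
    have "((\<lambda>s. real_of_ereal (b s)) \<longlongrightarrow> real_of_ereal (b t)) (at t)"
      using cont 1 by (simp add: continuous_on_eq_continuous_at continuous_at)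
    from tendsto_ereal[OF this] have "((\<lambda>s. ereal (real_of_ereal (b s))) \<longlongrightarrow> b t) (at t)"
      by (simp only: finite[OF 1])
    then show ?thesis unfolding isCont_def by (rule tendsto_cong[THEN iffD1, OF ev])
  next
    case 2
    have "eventually (\<lambda>s. s < 0) (at_left (0::real))"
      by (simp add: eventually_at_filter)
    then have ev: "eventually (\<lambda>s. ereal (real_of_ereal (b s)) = b s) (at_left 0)"
      by (rule eventually_mono) (rule finite)
    have "((\<lambda>s. ereal (real_of_ereal (b s))) \<longlongrightarrow> \<infinity>) (at_left 0)"
      using blowup by (simp add: tendsto_PInfty_eq_at_top)
    then have "(b \<longlongrightarrow> \<infinity>) (at_left 0)" by (rule tendsto_cong[THEN iffD1, OF ev])
    moreover have "eventually (\<lambda>s. b s = \<infinity>) (at_right (0::real))"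
      using eventually_at_right_less by (rule eventually_mono) (simp add: infinite)
    then have "(b \<longlongrightarrow> \<infinity>) (at_right 0)" by (rule tendsto_eventually)
    ultimately show ?thesis using 2 infinite[of 0] unfolding isCont_def by (simp add: filterlim_split_at)
  next
    case 3
    have "eventually (\<lambda>s. s > 0) (at t)"
      using 3 by (rule order_tendstoD(1)[OF tendsto_ident_at])
    then have "eventually (\<lambda>s. b s = b t) (at t)"
      by (rule eventually_mono) (simp add: 3 infinite less_imp_le)
    then show ?thesis unfolding isCont_def by (rule tendsto_eventually)
  qed
qed

lemma f_mu_eq_if:
  assumes "edom b = {..<0}" "\<And>t. b t \<ge> 0" "\<mu> > 0"
  shows "f_mu f b c \<mu> z = (if \<forall>i. c z $ i < 0
           then ereal (f z + \<mu> * (\<Sum>i\<in>UNIV. real_of_ereal (b (c z $ i)))) else \<infinity>)"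
proof (cases "\<forall>i. c z $ i < 0")
  case True
  then have "(\<Sum>i\<in>UNIV. b (c z $ i)) = ereal (\<Sum>i\<in>UNIV. real_of_ereal (b (c z $ i)))"
    using ereal_real_of_barrier[OF assms(1,2)] by (simp flip: sum_ereal)
  then show ?thesis using True by (simp add: f_mu_def)
next
  case False
  then obtain i where "c z $ i \<ge> 0" by (auto simp: not_less)
  then have "(\<Sum>i\<in>UNIV. b (c z $ i)) = \<infinity>"
    using barrier_eq_infinity[OF assms(1)] by (auto simp: sum_Pinfty)
  then show ?thesis using False assms(3) by (simp add: f_mu_def)
qed

lemma isCont_f_mu:
  assumes "isCont f x" "\<And>i. isCont (\<lambda>z. c z $ i) x" "\<And>t. isCont b t" "\<And>t. b t \<ge> 0" "\<mu> \<ge> 0"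
  shows "isCont (f_mu f b c \<mu>) x"
proof -
  have "((\<lambda>z. \<Sum>i\<in>UNIV. b (c z $ i)) \<longlongrightarrow> (\<Sum>i\<in>UNIV. b (c x $ i))) (at x)"
    using assms(2-4) by (intro tendsto_sum_ereal_nonneg isCont_tendsto_compose[of _ b]) (auto simp: isCont_def)
  then have "((\<lambda>z. ereal \<mu> * (\<Sum>i\<in>UNIV. b (c z $ i))) \<longlongrightarrow> ereal \<mu> * (\<Sum>i\<in>UNIV. b (c x $ i))) (at x)"
    by (rule tendsto_cmult_ereal[rotated]) simp
  then show ?thesis
    using assms(1) unfolding isCont_def f_mu_def
    by (intro tendsto_add_ereal_general2 tendsto_ereal) simp_all
qed

lemma f_mu_loc_lip_gradient:
  fixes c :: "real^'n \<Rightarrow> real^'m"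
  assumes f_grad: "loc_lip_gradient_on UNIV f" and c_jac: "loc_lip_jacobian c"
    and b_dom: "edom b = {..<0}" and b_nonneg: "\<And>t. b t \<ge> 0"
    and b'_deriv: "\<And>t. t < 0 \<Longrightarrow> ((\<lambda>s. real_of_ereal (b s)) has_real_derivative b' t) (at t)"
    and b''_deriv: "\<And>t. t < 0 \<Longrightarrow> (b' has_real_derivative b'' t) (at t)"
    and b''_cont: "continuous_on {..<0} b''"
    and "\<mu> > 0"
  shows "loc_lip_gradient_on {z. \<forall>i. c z $ i < 0} (\<lambda>z. real_of_ereal (f_mu f b c \<mu> z))"
proof -
  define S where "S = {z. \<forall>i. c z $ i < 0}"
  have c_grad: "loc_lip_gradient_on UNIV (\<lambda>z. c z $ i)" for i
    using c_jac by (rule loc_lip_jacobian_component_gradient)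
  have "continuous_on UNIV (\<lambda>z. c z $ i)" for i
    using c_grad by (intro continuous_at_imp_continuous_on ballI loc_lip_gradient_on_imp_isCont) auto
  then have "open {z. c z $ i < 0}" for i
    by (rule open_Collect_less[OF _ continuous_on_const])
  then have "open S"
    unfolding S_def Collect_all_eq by (intro open_INT) auto
  have "loc_lipschitz_on {..<0} b'"
    using b''_deriv b''_cont by (intro continuous_derivative_imp_loc_lipschitz_on) auto
  have barrier_grad: "loc_lip_gradient_on S (\<lambda>z. real_of_ereal (b (c z $ i)))" for i
  proof (rule loc_lip_gradient_on_compose[OF \<open>open S\<close>, where u="\<lambda>z. c z $ i" and h="\<lambda>s. real_of_ereal (b s)"])
    show "loc_lip_gradient_on S (\<lambda>z. c z $ i)"
      using c_grad by (rule loc_lip_gradient_on_subset) simp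
    show "(\<lambda>z. c z $ i) ` S \<subseteq> {..<0}"
      by (auto simp: S_def)
    show "((\<lambda>s. real_of_ereal (b s)) has_real_derivative b' t) (at t)" if "t \<in> {..<0}" for t
      using b'_deriv that by simp
  qed fact
  have "loc_lip_gradient_on S (\<lambda>z. f z + \<mu> * (\<Sum>i\<in>UNIV. real_of_ereal (b (c z $ i))))"
    by (intro loc_lip_gradient_on_add loc_lip_gradient_on_cmult loc_lip_gradient_on_sum barrier_grad
        loc_lip_gradient_on_subset[OF f_grad] subset_UNIV)
  then show ?thesis
    unfolding S_def[symmetric]
  proof (rule loc_lip_gradient_on_cong[OF \<open>open S\<close>, rotated])
    show "f z + \<mu> * (\<Sum>i\<in>UNIV. real_of_ereal (b (c z $ i))) = real_of_ereal (f_mu f b c \<mu> z)"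
      if "z \<in> S" for z
      using that by (simp add: f_mu_eq_if[OF b_dom b_nonneg \<open>\<mu> > 0\<close>] S_def)
  qed
qed

lemma INF_feasible_le_q_mu:
  assumes "edom b = {..<0}" "\<And>t. b t \<ge> 0" "\<mu> > 0"
  shows "(INF x\<in>{x. \<forall>i. c x $ i \<le> 0}. ereal (f x) + g x) \<le> q_mu f g b c \<mu> z"
proof (cases "\<forall>i. c z $ i < 0")
  case True
  then have "(INF x\<in>{x. \<forall>i. c x $ i \<le> 0}. ereal (f x) + g x) \<le> ereal (f z) + g z"
    by (intro INF_lower) (auto simp: less_imp_le)
  also have "\<dots> \<le> f_mu f b c \<mu> z + g z"
    using True assms by (intro add_right_mono) (simp add: f_mu_eq_if sum_nonneg real_of_ereal_pos)
  finally show ?thesis by (simp add: q_mu_def)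
next
  case False
  then show ?thesis using assms by (simp only: q_mu_def f_mu_eq_if if_False) simp
qed

lemma INF_q_mu_finite:
  assumes "edom b = {..<0}" "\<And>t. b t \<ge> 0" "\<mu> > 0"
    and "\<bar>INF x\<in>{x. \<forall>i. c x $ i \<le> 0}. ereal (f x) + g x\<bar> \<noteq> \<infinity>"
    and "edom (q_mu f g b c \<mu>) \<noteq> {}"
  shows "\<bar>INF z. q_mu f g b c \<mu> z\<bar> \<noteq> \<infinity>"
proof -
  obtain x0 where "q_mu f g b c \<mu> x0 \<noteq> \<infinity>"
    using assms(5) unfolding edom_def by blast
  have "(INF z. q_mu f g b c \<mu> z) < \<infinity>"
  proof -
    have "(INF z. q_mu f g b c \<mu> z) \<le> q_mu f g b c \<mu> x0"
      by (rule INF_lower) simp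
    also have "\<dots> < \<infinity>"
      using \<open>q_mu f g b c \<mu> x0 \<noteq> \<infinity>\<close> by (simp add: less_top[symmetric])
    finally show ?thesis .
  qed
  moreover have "(INF z. q_mu f g b c \<mu> z) > -\<infinity>"
  proof -
    have "-\<infinity> < (INF x\<in>{x. \<forall>i. c x $ i \<le> 0}. ereal (f x) + g x)"
      using assms(4) by auto
    also have "\<dots> \<le> (INF z. q_mu f g b c \<mu> z)"
      by (rule INF_greatest) (rule INF_feasible_le_q_mu[OF assms(1-3)])
    finally show ?thesis .
  qed
  ultimately show ?thesis by auto
qed

theorem lemma3p2:
  fixes f :: "real^'n \<Rightarrow> real"
    and g :: "real^'n \<Rightarrow> ereal"
    and c :: "real^'n \<Rightarrow> real^'m"
    and b :: "real \<Rightarrow> ereal"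
    and \<mu> :: real
  assumes f_grad: "loc_lip_gradient_on UNIV f"
    and g_proper: "proper_fun g"
    and g_lsc: "lsc_fun g"
    and g_proxbdd: "\<exists>\<gamma>>0. \<exists>B::real. \<forall>x. ereal B \<le> g x + ereal (norm x ^ 2 / (2 * \<gamma>))"
    and g_cont_dom: "\<And>X x. (\<forall>k. X k \<in> edom g) \<Longrightarrow> X \<longlonglongrightarrow> x \<Longrightarrow> (\<lambda>k. g (X k)) \<longlonglongrightarrow> g x"
    and c_jac: "loc_lip_jacobian c"
    and inf_finite: "\<bar>INF x\<in>{x. \<forall>i. c x $ i \<le> 0}. ereal (f x) + g x\<bar> \<noteq> \<infinity>"
    and F_nonempty: "edom (\<lambda>x. ereal (f x) + g x) \<inter> {x. \<forall>i. c x $ i < 0} \<noteq> {}"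
    and b_nonneg: "\<And>t. b t \<ge> 0"
    and b_dom: "edom b = {..<0}"
    and b_C2: "\<exists>b' b''. (\<forall>t<0. ((\<lambda>s. real_of_ereal (b s)) has_real_derivative b' t) (at t)
                                 \<and> (b' has_real_derivative b'' t) (at t) \<and> b' t > 0)
                       \<and> continuous_on {..<0} b''"
    and b_blowup: "filterlim (\<lambda>t. real_of_ereal (b t)) at_top (at_left 0)"
    and mu_pos: "\<mu> > 0"
  shows "proper_fun (q_mu f g b c \<mu>) \<and> lsc_fun (q_mu f g b c \<mu>)
         \<and> edom (q_mu f g b c \<mu>) = edom g \<inter> {z. \<forall>i. c z $ i < 0}
         \<and> \<bar>INF z. q_mu f g b c \<mu> z\<bar> \<noteq> \<infinity>
         \<and> edom (f_mu f b c \<mu>) = {z. \<forall>i. c z $ i < 0}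
         \<and> loc_lip_gradient_on {z. \<forall>i. c z $ i < 0} (\<lambda>z. real_of_ereal (f_mu f b c \<mu> z))"
proof -
  obtain b' b'' where b'_deriv: "\<And>t. t < 0 \<Longrightarrow> ((\<lambda>s. real_of_ereal (b s)) has_real_derivative b' t) (at t)"
    and b''_deriv: "\<And>t. t < 0 \<Longrightarrow> (b' has_real_derivative b'' t) (at t)"
    and b''_cont: "continuous_on {..<0} b''"
    using b_C2 by blast
  have "continuous_on {..<0} (\<lambda>s. real_of_ereal (b s))"
    using b'_deriv by (intro continuous_at_imp_continuous_on ballI DERIV_isCont) auto
  then have "isCont b t" for t
    by (rule isCont_barrier[OF b_dom b_nonneg _ b_blowup])
  then have f_mu_cont: "isCont (f_mu f b c \<mu>) x" for x
    using loc_lip_gradient_on_imp_isCont[OF f_grad]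
      loc_lip_gradient_on_imp_isCont[OF loc_lip_jacobian_component_gradient[OF c_jac]]
    by (intro isCont_f_mu b_nonneg less_imp_le[OF mu_pos]) auto
  have g_ninf: "g z \<noteq> -\<infinity>" for z
    using g_proper unfolding proper_fun_def by blast
  note f_mu_eq = f_mu_eq_if[OF b_dom b_nonneg mu_pos]
  have lsc: "lsc_fun (q_mu f g b c \<mu>)"
    unfolding q_mu_def
    by (rule lsc_fun_add[OF lsc_fun_if_continuous[OF f_mu_cont] g_lsc _ g_ninf]) (simp add: f_mu_eq)
  have edom_q_mu: "edom (q_mu f g b c \<mu>) = edom g \<inter> {z. \<forall>i. c z $ i < 0}"
    using g_ninf by (auto simp: edom_def q_mu_def f_mu_eq)
  moreover have "edom (q_mu f g b c \<mu>) \<noteq> {}"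
    using F_nonempty unfolding edom_q_mu by (auto simp: edom_def)
  ultimately show ?thesis
    using lsc g_ninf INF_q_mu_finite[OF b_dom b_nonneg mu_pos inf_finite]
      f_mu_loc_lip_gradient[OF f_grad c_jac b_dom b_nonneg b'_deriv b''_deriv b''_cont mu_pos]
    by (auto simp: proper_fun_def edom_def q_mu_def f_mu_eq)
qed

end
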